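(* Let $m\ge1$, $n\ge1$, $N>2n$, let $\Sigma_0,\dots,\Sigma_n\in\mathbb R^{m\times m}$, and let $\mathbf T_n$ be the $(n+1)m\times(n+1)m$ block-Toeplitz matrix whose $(i,j)$ block ($i,j=0,\dots,n$) is $\Sigma_{i-j}$ if $i\ge j$ and $\Sigma_{j-i}^\top$ if $i<j$. Consider the maximum entropy problem (MEP): minimize $-\log\det\boldsymbol\Sigma$ over symmetric positive definite $mN\times mN$ matrices $\boldsymbol\Sigma$ subject to $E_n^\top\boldsymbol\Sigma E_n=\mathbf T_n$ and $\mathbf U_N^\top\boldsymbol\Sigma\mathbf U_N=\boldsymbol\Sigma$. Let $\boldsymbol\Sigma^o_N$ be a minimizer of (MEP). Then $(\boldsymbol\Sigma^o_N)^{-1}$ is a symmetric block-circulant matrix which is banded of bandwidth $n$. Hence $\boldsymbol\Sigma_N^o$ is the covariance matrix of a stationary reciprocal process of order $n$ on $\mathbb Z_N$.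
   Context: $E_n$ is the $mN\times m(n+1)$ matrix consisting of $N\times(n+1)$ blocks of size $m\times m$ whose $(i,i)$ blocks ($i=1,\dots,n+1$) are $I_m$ and all other blocks are $0$; thus $E_n^\top\boldsymbol\Sigma E_n$ is the upper-left $(n+1)\times(n+1)$ block corner of $\boldsymbol\Sigma$. $\mathbf U_N$ is the $mN\times mN$ block-circulant shift matrix whose $(i,i+1)$ blocks ($i=1,\dots,N-1$) and $(N,1)$ block equal $I_m$ and all other blocks are $0$; a matrix $\boldsymbol\Sigma$ is block-circulant (its $(i,j)$ block depends only on $(i-j)\bmod N$) iff $\mathbf U_N^\top\boldsymbol\Sigma\mathbf U_N=\boldsymbol\Sigma$. A block-circulant matrix is banded of bandwidth $n$ if its $(i,j)$ block is zero whenever the cyclic distance $\min\{(i-j)\bmod N,(j-i)\bmod N\}$ exceeds $n$. A process on $\mathbb Z_N$ is an $m$-dimensional zero-mean second-order process $\{\mathbf y(t)\}_{t=1}^N$ with time indices taken mod $N$ and symmetric block-circulant covariance $\mathbb E\,\mathbf y\mathbf y^\top$ (such a process is called stationary). Writing $\hat{\mathbb E}[\cdot\mid\cdot]$ for orthogonal projection onto the closed linear span of the scalar components of the conditioning variables, subspaces $\mathcal A,\mathcal B$ are conditionally orthogonal given $\mathcal C$ if $(a-\hat{\mathbb E}[a\mid\mathcal C])$ and $(b-\hat{\mathbb E}[b\mid\mathcal C])$ are uncorrelated for all $a\in\mathcal A,b\in\mathcal B$. The process is reciprocal of order $n$ if for every (cyclic) interval $(t_1,t_2)$ the variables $\{\mathbf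 y(t):t\in(t_1,t_2)\}$ are conditionally orthogonal to $\{\mathbf y(s): s\notin(t_1,t_2)\}$ given $\mathbf y(t_1-n+1),\dots,\mathbf y(t_1),\mathbf y(t_2),\dots,\mathbf y(t_2+n-1)$. *)

theory Defs
  imports "Jordan_Normal_Form.Determinant" "Jordan_Normal_Form.Gauss_Jordan_Elimination"
begin

text \<open>Conventions: time indices and block indices are 0-based, t = 0..N-1 (the paper
uses 1..N).  Row/column k of an mN x mN matrix belongs to block k div m, component k mod m.\<close>

definition sym_mat :: "real mat \<Rightarrow> bool" where
  "sym_mat A \<longleftrightarrow> transpose_mat A = A"

definition pos_def :: "nat \<Rightarrow> real mat \<Rightarrow> bool" where
  "pos_def d A \<longleftrightarrow> A \<in> carrier_mat d d \<and> sym_mat A \<and>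
     (\<forall>v \<in> carrier_vec d. v \<noteq> 0\<^sub>v d \<longrightarrow> v \<bullet> (A *\<^sub>v v) > 0)"

definition pos_semidef :: "nat \<Rightarrow> real mat \<Rightarrow> bool" where
  "pos_semidef d A \<longleftrightarrow> A \<in> carrier_mat d d \<and> sym_mat A \<and>
     (\<forall>v \<in> carrier_vec d. v \<bullet> (A *\<^sub>v v) \<ge> 0)"

definition block_toeplitz :: "nat \<Rightarrow> nat \<Rightarrow> (nat \<Rightarrow> real mat) \<Rightarrow> real mat" where
  "block_toeplitz m n Sig = mat ((n+1)*m) ((n+1)*m) (\<lambda>(r,c).
     let i = r div m; a = r mod m; j = c div m; b = c mod m in
     if j \<le> i then Sig (i - j) $$ (a, b) else Sig (j - i) $$ (b, a))"

definition E_mat :: "nat \<Rightarrow> nat \<Rightarrow> nat \<Rightarrow> real mat" where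
  "E_mat m N n = mat (m*N) (m*(n+1)) (\<lambda>(r,c).
     if r div m = c div m \<and> r mod m = c mod m then 1 else 0)"

definition U_mat :: "nat \<Rightarrow> nat \<Rightarrow> real mat" where
  "U_mat m N = mat (m*N) (m*N) (\<lambda>(r,c).
     if c div m = (r div m + 1) mod N \<and> c mod m = r mod m then 1 else 0)"

definition block_circulant :: "nat \<Rightarrow> nat \<Rightarrow> real mat \<Rightarrow> bool" where
  "block_circulant m N A \<longleftrightarrow> transpose_mat (U_mat m N) * A * U_mat m N = A"

definition cyc_dist :: "nat \<Rightarrow> nat \<Rightarrow> nat \<Rightarrow> nat" where
  "cyc_dist N i j = min (nat ((int i - int j) mod int N)) (nat ((int j - int i) mod int N))"

definition banded :: "nat \<Rightarrow> nat \<Rightarrow> nat \<Rightarrow> real mat \<Rightarrow> bool" where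
  "banded m N n A \<longleftrightarrow> (\<forall>r < m*N. \<forall>c < m*N.
      cyc_dist N (r div m) (c div m) > n \<longrightarrow> A $$ (r, c) = 0)"

definition MEP_feasible :: "nat \<Rightarrow> nat \<Rightarrow> nat \<Rightarrow> (nat \<Rightarrow> real mat) \<Rightarrow> real mat \<Rightarrow> bool" where
  "MEP_feasible m N n Sig S \<longleftrightarrow> pos_def (m*N) S \<and>
     transpose_mat (E_mat m N n) * S * E_mat m N n = block_toeplitz m n Sig \<and>
     transpose_mat (U_mat m N) * S * U_mat m N = S"

definition MEP_minimizer :: "nat \<Rightarrow> nat \<Rightarrow> nat \<Rightarrow> (nat \<Rightarrow> real mat) \<Rightarrow> real mat \<Rightarrow> bool" where
  "MEP_minimizer m N n Sig S \<longleftrightarrow> MEP_feasible m N n Sig S \<and>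
     (\<forall>S'. MEP_feasible m N n Sig S' \<longrightarrow> - ln (det S) \<le> - ln (det S'))"

text \<open>Second-order process described through its covariance Sigma (mN x mN):
 the Hilbert space spanned by the scalar components y_a(t) is identified with
 coefficient vectors u \<in> R^{mN}, with inner product E[(u^T y)(v^T y)] = u^T Sigma v.
 The span of {y(t) : t \<in> T} is the set of vectors supported on blocks in T.\<close>
definition span_times :: "nat \<Rightarrow> nat \<Rightarrow> nat set \<Rightarrow> real vec set" where
  "span_times m N T = {u \<in> carrier_vec (m*N). \<forall>k < m*N. k div m \<notin> T \<longrightarrow> u $ k = 0}"

definition cov_inner :: "real mat \<Rightarrow> real vec \<Rightarrow> real vec \<Rightarrow> real" where
  "cov_inner S u v = u \<bullet> (S *\<^sub>v v)"

text \<open>Conditional orthogonality of span(A) and span(B) given span(C):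
 if p is an orthogonal projection of a onto span(C) and q of b, then the residuals are
 uncorrelated.\<close>
definition cond_orth :: "nat \<Rightarrow> nat \<Rightarrow> real mat \<Rightarrow> nat set \<Rightarrow> nat set \<Rightarrow> nat set \<Rightarrow> bool" where
  "cond_orth m N S A B C \<longleftrightarrow>
    (\<forall>u \<in> span_times m N A. \<forall>v \<in> span_times m N B.
     \<forall>p \<in> span_times m N C. \<forall>q \<in> span_times m N C.
       (\<forall>w \<in> span_times m N C. cov_inner S (u - p) w = 0) \<longrightarrow>
       (\<forall>w \<in> span_times m N C. cov_inner S (v - q) w = 0) \<longrightarrow>
       cov_inner S (u - p) (v - q) = 0)"

text \<open>Cyclic open interval (t1,t2) = {t1+1, ..., t2-1} mod N; for t1 = t2 it is
 {t1+1, ..., t1+N-1} mod N.\<close>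
definition cyc_open :: "nat \<Rightarrow> nat \<Rightarrow> nat \<Rightarrow> nat set" where
  "cyc_open N t1 t2 = (let d = (t2 + N - t1 - 1) mod N + 1 in
     {(t1 + k) mod N | k. 0 < k \<and> k < d})"

definition cyc_boundary :: "nat \<Rightarrow> nat \<Rightarrow> nat \<Rightarrow> nat \<Rightarrow> nat set" where
  "cyc_boundary N n t1 t2 =
     {nat ((int t1 - int k) mod int N) | k. k < n} \<union> {(t2 + k) mod N | k. k < n}"

definition reciprocal :: "nat \<Rightarrow> nat \<Rightarrow> nat \<Rightarrow> real mat \<Rightarrow> bool" where
  "reciprocal m N n S \<longleftrightarrow> (\<forall>t1 < N. \<forall>t2 < N.
     cond_orth m N S (cyc_open N t1 t2) ({..<N} - cyc_open N t1 t2) (cyc_boundary N n t1 t2))"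

definition stationary_reciprocal_cov :: "nat \<Rightarrow> nat \<Rightarrow> nat \<Rightarrow> real mat \<Rightarrow> bool" where
  "stationary_reciprocal_cov m N n S \<longleftrightarrow>
     pos_semidef (m*N) S \<and> block_circulant m N S \<and> reciprocal m N n S"

end

theory Submission
  imports Defs
begin

text \<open>An optimal \<open>S\<close> satisfies the first-order condition \<open>tr (S\<inverse> D) = 0\<close> for every symmetric
  block-circulant \<open>D\<close> vanishing on the leading \<open>(n + 1) m \<times> (n + 1) m\<close> corner: otherwise
  \<open>det (S + t D) = det S \<cdot> det (1 + t S\<inverse> D)\<close> exceeds \<open>det S\<close> for a small \<open>t\<close> of suitable sign,
  while \<open>S + t D\<close> stays feasible. Taking for \<open>D\<close> the pattern of one entry of all blocks at cyclic
  distance \<open>k > n\<close> (symmetrised), block-circulance of \<open>S\<inverse>\<close> makes \<open>tr (S\<inverse> D)\<close> a nonzero multiple of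
  that entry of \<open>S\<inverse>\<close>, which therefore vanishes. Reciprocity then follows from the bandedness: the
  residuals of the interior and of the exterior of an interval, projected on its boundary of width
  \<open>n\<close>, are orthogonal because \<open>S\<inverse>\<close> has no entry linking interior and exterior.\<close>

section \<open>Determinants and positive definite matrices\<close>

lemma coeff_prod_linear:
  fixes c e :: "'i \<Rightarrow> 'a :: comm_ring_1"
  assumes "finite F"
  shows "coeff (\<Prod>i\<in>F. [:c i, e i:]) 0 = (\<Prod>i\<in>F. c i)"
    and "coeff (\<Prod>i\<in>F. [:c i, e i:]) 1 = (\<Sum>k\<in>F. e k * (\<Prod>i\<in>F - {k}. c i))"
proof -
  have "coeff (\<Prod>i\<in>F. [:c i, e i:]) 0 = (\<Prod>i\<in>F. c i) \<and>
        coeff (\<Prod>i\<in>F. [:c i, e i:]) 1 = (\<Sum>k\<in>F. e k * (\<Prod>i\<in>F - {k}. c i))"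
    using assms
  proof (induction F rule: finite_induct)
    case (insert x F)
    have "(\<Sum>k\<in>F. e k * (\<Prod>i\<in>insert x F - {k}. c i)) = c x * (\<Sum>k\<in>F. e k * (\<Prod>i\<in>F - {k}. c i))"
      unfolding sum_distrib_left
    proof (rule sum.cong[OF refl])
      fix k assume "k \<in> F"
      then have "insert x F - {k} = insert x (F - {k})" using insert.hyps by auto
      then show "e k * (\<Prod>i\<in>insert x F - {k}. c i) = c x * (e k * (\<Prod>i\<in>F - {k}. c i))"
        using insert.hyps by (simp add: algebra_simps)
    qed
    moreover have "insert x F - {x} = F" using insert.hyps by auto
    ultimately show ?case
      using insert by (simp add: coeff_mult algebra_simps)
  qed simp
  then show "coeff (\<Prod>i\<in>F. [:c i, e i:]) 0 = (\<Prod>i\<in>F. c i)"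
    and "coeff (\<Prod>i\<in>F. [:c i, e i:]) 1 = (\<Sum>k\<in>F. e k * (\<Prod>i\<in>F - {k}. c i))"
    by simp_all
qed

lemma permutes_id_if_fixes_all_but_one:
  assumes p: "p permutes S" and fixed: "\<And>i. i \<in> S - {k} \<Longrightarrow> p i = i"
  shows "p = id"
proof -
  have "p k = k"
  proof (rule ccontr)
    assume ne: "p k \<noteq> k"
    then have "k \<in> S" using p by (meson permutes_not_in)
    then have "p (p k) = p k" using fixed ne permutes_in_image[OF p] by blast
    then show False using ne permutes_inj[OF p] by (meson injD)
  qed
  then show ?thesis using fixed p by (intro ext) (metis DiffI id_apply permutes_not_in singletonD)
qed

text \<open>Expanding the Leibniz formula, only the identity permutation contributes to the
  linear coefficient.\<close>
lemma det_one_plus_smult_poly: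
  fixes A :: "'a :: comm_ring_1 mat"
  assumes A: "A \<in> carrier_mat d d"
  shows "\<exists>P. (\<forall>t. poly P t = det (1\<^sub>m d + t \<cdot>\<^sub>m A)) \<and> coeff P 1 = (\<Sum>i<d. A $$ (i,i))"
proof -
  let ?c = "\<lambda>p i. if p i = i then 1 else 0 :: 'a" and ?e = "\<lambda>p i. A $$ (i, p i)"
  define P where "P = (\<Sum>p | p permutes {0..<d}. smult (signof p) (\<Prod>i\<in>{0..<d}. [:?c p i, ?e p i:]))"
  have "poly P t = det (1\<^sub>m d + t \<cdot>\<^sub>m A)" for t
  proof -
    have M: "1\<^sub>m d + t \<cdot>\<^sub>m A \<in> carrier_mat d d" using A by simp
    show ?thesis unfolding det_def'[OF M] P_def poly_sum poly_smult poly_prod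
    proof (intro sum.cong refl arg_cong[where f = "(*) _"] prod.cong)
      fix p i assume "p \<in> {p. p permutes {0..<d}}" "i \<in> {0..<d}"
      then have "p i < d" by (simp add: permutes_in_image)
      then show "poly [:?c p i, ?e p i:] t = (1\<^sub>m d + t \<cdot>\<^sub>m A) $$ (i, p i)"
        using \<open>i \<in> {0..<d}\<close> A by auto
    qed
  qed
  moreover have "coeff P 1 = (\<Sum>i<d. A $$ (i,i))"
  proof -
    have "coeff P 1 = (\<Sum>p | p permutes {0..<d}. if p = id then (\<Sum>k<d. A $$ (k,k)) else 0)"
      unfolding P_def coeff_sum coeff_smult coeff_prod_linear(2)[OF finite_atLeastLessThan]
    proof (rule sum.cong[OF refl])
      fix p assume "p \<in> {p. p permutes {0..<d}}"
      then have p: "p permutes {0..<d}" by simp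
      show "signof p * (\<Sum>k\<in>{0..<d}. ?e p k * (\<Prod>i\<in>{0..<d} - {k}. ?c p i)) =
            (if p = id then \<Sum>k<d. A $$ (k,k) else 0)"
      proof (cases "p = id")
        case False
        have "(\<Prod>i\<in>{0..<d} - {k}. ?c p i) = 0" for k
          using permutes_id_if_fixes_all_but_one[OF p, of k] False by (intro prod_zero) auto
        then show ?thesis using False by simp
      qed (simp add: atLeast0LessThan)
    qed
    also have "\<dots> = (\<Sum>i<d. A $$ (i,i))"
      by (simp add: sum.delta' finite_permutations permutes_id)
    finally show ?thesis .
  qed
  ultimately show ?thesis by blast
qed

lemma continuous_on_det_one_plus_smult:
  fixes A :: "real mat"
  assumes "A \<in> carrier_mat d d"
  shows "continuous_on T (\<lambda>t. det (1\<^sub>m d + t \<cdot>\<^sub>m A))"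
proof -
  obtain P where "\<And>t. poly P t = det (1\<^sub>m d + t \<cdot>\<^sub>m A)"
    using det_one_plus_smult_poly[OF assms] by blast
  then show ?thesis using continuous_on_poly[of T "\<lambda>t. t" P] by (simp add: continuous_on_id)
qed

lemma has_derivative_det_one_plus_smult:
  fixes A :: "real mat"
  assumes "A \<in> carrier_mat d d"
  shows "((\<lambda>t. det (1\<^sub>m d + t \<cdot>\<^sub>m A)) has_real_derivative (\<Sum>i<d. A $$ (i,i))) (at 0)"
proof -
  obtain P where P: "\<And>t. poly P t = det (1\<^sub>m d + t \<cdot>\<^sub>m A)" and P1: "coeff P 1 = (\<Sum>i<d. A $$ (i,i))"
    using det_one_plus_smult_poly[OF assms] by blast
  have "(poly P has_real_derivative coeff P 1) (at 0)"
    using poly_DERIV[of P 0] by (simp add: poly_0_coeff_0 coeff_pderiv)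
  then show ?thesis unfolding P1 P[abs_def] .
qed

lemma scalar_prod_self_nonneg: "0 \<le> (v :: real vec) \<bullet> v"
  using conjugate_square_ge_0_vec[of v] by simp

lemma scalar_prod_self_pos: "(v :: real vec) \<in> carrier_vec d \<Longrightarrow> v \<noteq> 0\<^sub>v d \<Longrightarrow> 0 < v \<bullet> v"
  using conjugate_square_greater_0_vec[of v d] by simp

lemma sym_mat_entry: "sym_mat A \<Longrightarrow> A \<in> carrier_mat d d \<Longrightarrow> i < d \<Longrightarrow> j < d \<Longrightarrow> A $$ (j, i) = A $$ (i, j)"
  unfolding sym_mat_def by (metis carrier_matD index_transpose_mat(1))

lemma sym_mat_add_smult:
  assumes "A \<in> carrier_mat d d" "B \<in> carrier_mat d d" "sym_mat A" "sym_mat B"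
  shows "sym_mat (A + t \<cdot>\<^sub>m B)"
  using assms sym_mat_entry[of A d] sym_mat_entry[of B d] unfolding sym_mat_def
  by (intro eq_matI) auto

lemma sym_mat_scalar_prod_comm:
  fixes A :: "real mat"
  assumes "A \<in> carrier_mat d d" "sym_mat A" "u \<in> carrier_vec d" "v \<in> carrier_vec d"
  shows "u \<bullet> (A *\<^sub>v v) = v \<bullet> (A *\<^sub>v u)"
  using assms transpose_vec_mult_scalar[of A d d v u] comm_scalar_prod[of v d "A *\<^sub>v u"]
  unfolding sym_mat_def by simp

lemma quadratic_form_add_smult:
  fixes A B :: "real mat"
  assumes "A \<in> carrier_mat d d" "B \<in> carrier_mat d d" "v \<in> carrier_vec d"
  shows "v \<bullet> ((A + t \<cdot>\<^sub>m B) *\<^sub>v v) = v \<bullet> (A *\<^sub>v v) + t * (v \<bullet> (B *\<^sub>v v))"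
proof -
  have "(t \<cdot>\<^sub>m B) *\<^sub>v v = t \<cdot>\<^sub>v (B *\<^sub>v v)"
    using assms by (intro eq_vecI) (auto simp: scalar_prod_def sum_distrib_left mult.assoc)
  then show ?thesis
    using assms by (simp add: add_mult_distrib_mat_vec scalar_prod_add_distrib[of v d])
qed

lemma abs_quadratic_form_le:
  fixes A :: "real mat"
  assumes A: "A \<in> carrier_mat d d" and v: "v \<in> carrier_vec d"
  shows "\<bar>v \<bullet> (A *\<^sub>v v)\<bar> \<le> (\<Sum>i<d. \<Sum>j<d. \<bar>A $$ (i,j)\<bar>) * (v \<bullet> v)"
proof -
  have vv: "v \<bullet> v = (\<Sum>i<d. (v $ i)\<^sup>2)"
    using v by (simp add: scalar_prod_def atLeast0LessThan power2_eq_square)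
  have sq: "(v $ i)\<^sup>2 \<le> v \<bullet> v" if "i < d" for i
    unfolding vv using that by (intro member_le_sum) auto
  have prod: "\<bar>v $ i\<bar> * \<bar>v $ j\<bar> \<le> v \<bullet> v" if "i < d" "j < d" for i j
  proof (rule power2_le_imp_le)
    have "(\<bar>v $ i\<bar> * \<bar>v $ j\<bar>)\<^sup>2 = (v $ i)\<^sup>2 * (v $ j)\<^sup>2" by (simp add: power_mult_distrib)
    also have "\<dots> \<le> (v \<bullet> v) * (v \<bullet> v)"
      using sq that scalar_prod_self_nonneg by (intro mult_mono) auto
    finally show "(\<bar>v $ i\<bar> * \<bar>v $ j\<bar>)\<^sup>2 \<le> (v \<bullet> v)\<^sup>2" by (simp add: power2_eq_square)
  qed (rule scalar_prod_self_nonneg)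
  have "\<bar>v \<bullet> (A *\<^sub>v v)\<bar> = \<bar>\<Sum>i<d. \<Sum>j<d. A $$ (i,j) * (v $ i * v $ j)\<bar>"
    using A v by (simp add: scalar_prod_def atLeast0LessThan sum_distrib_left algebra_simps)
  also have "\<dots> \<le> (\<Sum>i<d. \<Sum>j<d. \<bar>A $$ (i,j)\<bar> * (\<bar>v $ i\<bar> * \<bar>v $ j\<bar>))"
    by (rule order_trans[OF sum_abs sum_mono], rule order_trans[OF sum_abs])
      (simp add: abs_mult)
  also have "\<dots> \<le> (\<Sum>i<d. \<Sum>j<d. \<bar>A $$ (i,j)\<bar> * (v \<bullet> v))"
    using prod by (intro sum_mono mult_left_mono) auto
  finally show ?thesis by (simp add: sum_distrib_right)
qed

lemma pos_def_imp_pos_semidef: "pos_def d S \<Longrightarrow> pos_semidef d S"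
  unfolding pos_def_def pos_semidef_def by (metis less_imp_le mult_mat_vec_carrier scalar_prod_left_zero order_refl)

text \<open>The matrices \<open>1 + s (S - 1)\<close>, \<open>0 \<le> s \<le> 1\<close>, are all positive definite, hence
  nonsingular, so by continuity their determinant keeps the sign it has at \<open>s = 0\<close>.\<close>
lemma pos_def_det_pos:
  assumes pd: "pos_def d S"
  shows "det S > 0"
proof (rule ccontr)
  assume "\<not> det S > 0"
  have S: "S \<in> carrier_mat d d" using pd unfolding pos_def_def by auto
  define A where "A = S - 1\<^sub>m d"
  have A: "A \<in> carrier_mat d d" using S unfolding A_def by (simp add: minus_carrier_mat)
  let ?f = "\<lambda>s. det (1\<^sub>m d + s \<cdot>\<^sub>m A)"
  have "1\<^sub>m d + 1 \<cdot>\<^sub>m A = S" unfolding A_def using S by (intro eq_matI) auto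
  then have "?f 1 \<le> 0" using \<open>\<not> det S > 0\<close> by simp
  moreover have "1\<^sub>m d + 0 \<cdot>\<^sub>m A = 1\<^sub>m d" using A by (intro eq_matI) auto
  then have "0 \<le> ?f 0" by simp
  ultimately obtain s where s: "0 \<le> s" "s \<le> 1" "?f s = 0"
    using IVT2'[of ?f 1 0 0] continuous_on_det_one_plus_smult[OF A] by auto
  then obtain v where v: "v \<in> carrier_vec d" "v \<noteq> 0\<^sub>v d" "(1\<^sub>m d + s \<cdot>\<^sub>m A) *\<^sub>v v = 0\<^sub>v d"
    using det_0_iff_vec_prod_zero[of "1\<^sub>m d + s \<cdot>\<^sub>m A" d] A by auto
  have "v \<bullet> (A *\<^sub>v v) = v \<bullet> (S *\<^sub>v v) - v \<bullet> v"
    using S v unfolding A_def by (simp add: minus_mult_distrib_mat_vec scalar_prod_minus_distrib[of v d])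
  then have "v \<bullet> ((1\<^sub>m d + s \<cdot>\<^sub>m A) *\<^sub>v v) = (1 - s) * (v \<bullet> v) + s * (v \<bullet> (S *\<^sub>v v))"
    using quadratic_form_add_smult[OF one_carrier_mat A v(1)] v(1) by (simp add: algebra_simps flip: distrib_left)
  moreover have "0 < (1 - s) * (v \<bullet> v) + s * (v \<bullet> (S *\<^sub>v v))"
  proof -
    have "0 < v \<bullet> v" "0 < v \<bullet> (S *\<^sub>v v)"
      using scalar_prod_self_pos[OF v(1,2)] pd v unfolding pos_def_def by auto
    then show ?thesis using s
      by (cases "s = 0") (auto intro: add_nonneg_pos add_pos_nonneg)
  qed
  ultimately show False using v by simp
qed

lemma pos_def_inverse:
  assumes pd: "pos_def d S"
  obtains K where "K \<in> carrier_mat d d" "S * K = 1\<^sub>m d" "K * S = 1\<^sub>m d" "sym_mat K"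
proof -
  have S: "S \<in> carrier_mat d d" and symS: "transpose_mat S = S"
    using pd unfolding pos_def_def sym_mat_def by auto
  obtain K where K: "K \<in> carrier_mat d d" and KS: "K * S = 1\<^sub>m d" and SK: "S * K = 1\<^sub>m d"
    using det_non_zero_imp_unit[OF S] pos_def_det_pos[OF pd] unfolding Units_def ring_mat_def by auto
  have "transpose_mat K * S = 1\<^sub>m d"
    using arg_cong[OF SK, of transpose_mat] transpose_mult[OF S K] symS by simp
  then have "transpose_mat K = K"
    using assoc_mult_mat[of "transpose_mat K" d d S d K d] K S SK by simp
  then show ?thesis using that K KS SK unfolding sym_mat_def by blast
qed

text \<open>With \<open>w = S\<inverse> v\<close> and \<open>M\<close> bounding the quadratic form of \<open>S\<inverse>\<close>, positivity of the form
  of \<open>S\<close> at \<open>v - w / M\<close> yields \<open>v \<bullet> v / M \<le> v \<bullet> S v\<close>.\<close>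
lemma pos_def_coercive:
  assumes pd: "pos_def d S"
  obtains c :: real where "c > 0" "\<And>v. v \<in> carrier_vec d \<Longrightarrow> c * (v \<bullet> v) \<le> v \<bullet> (S *\<^sub>v v)"
proof -
  have S: "S \<in> carrier_mat d d" and symS: "sym_mat S" using pd unfolding pos_def_def by auto
  obtain K where K: "K \<in> carrier_mat d d" and SK: "S * K = 1\<^sub>m d"
    using pos_def_inverse[OF pd] by blast
  define M where "M = (\<Sum>i<d. \<Sum>j<d. \<bar>K $$ (i,j)\<bar>) + 1"
  have M: "M > 0" unfolding M_def by (smt (verit) sum_nonneg abs_ge_zero)
  have "1 / M * (v \<bullet> v) \<le> v \<bullet> (S *\<^sub>v v)" if v: "v \<in> carrier_vec d" for v
  proof -
    define l where "l = 1 / M"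
    define w where "w = K *\<^sub>v v"
    have w: "w \<in> carrier_vec d" unfolding w_def using K v by simp
    have Sw: "S *\<^sub>v w = v" unfolding w_def using K S SK v by (simp flip: assoc_mult_mat_vec)
    have wSv: "w \<bullet> (S *\<^sub>v v) = v \<bullet> v" using sym_mat_scalar_prod_comm[OF S symS w v] Sw by simp
    have wSw: "w \<bullet> (S *\<^sub>v w) \<le> M * (v \<bullet> v)"
    proof -
      have "w \<bullet> (S *\<^sub>v w) = v \<bullet> (K *\<^sub>v v)"
        using Sw comm_scalar_prod[OF w v] unfolding w_def by simp
      also have "\<dots> \<le> (M - 1) * (v \<bullet> v)" using abs_quadratic_form_le[OF K v] unfolding M_def by simp
      also have "\<dots> \<le> M * (v \<bullet> v)" using scalar_prod_self_nonneg[of v] by (simp add: algebra_simps)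
      finally show ?thesis .
    qed
    have "0 \<le> (v - l \<cdot>\<^sub>v w) \<bullet> (S *\<^sub>v (v - l \<cdot>\<^sub>v w))"
      using pd v w unfolding pos_def_def
      by (cases "v - l \<cdot>\<^sub>v w = 0\<^sub>v d") (auto intro: less_imp_le)
    also have "\<dots> = v \<bullet> (S *\<^sub>v v) - 2 * l * (v \<bullet> v) + l\<^sup>2 * (w \<bullet> (S *\<^sub>v w))"
      using S v w wSv sym_mat_scalar_prod_comm[OF S symS v w]
      by (simp add: mult_minus_distrib_mat_vec mult_mat_vec minus_scalar_prod_distrib[of _ d]
          scalar_prod_minus_distrib[of _ d] power2_eq_square algebra_simps)
    also have "\<dots> \<le> v \<bullet> (S *\<^sub>v v) - 2 * l * (v \<bullet> v) + l\<^sup>2 * (M * (v \<bullet> v))"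
      using wSw by (simp add: mult_left_mono)
    also have "\<dots> = v \<bullet> (S *\<^sub>v v) - l * (v \<bullet> v)"
      unfolding l_def using M by (simp add: power2_eq_square field_simps)
    finally show ?thesis unfolding l_def by simp
  qed
  then show ?thesis using that[of "1 / M"] M by simp
qed

lemma pos_def_add_smult:
  assumes pd: "pos_def d S" and D: "D \<in> carrier_mat d d" and symD: "sym_mat D"
  obtains \<delta> :: real where "\<delta> > 0" "\<And>t. \<bar>t\<bar> < \<delta> \<Longrightarrow> pos_def d (S + t \<cdot>\<^sub>m D)"
proof -
  have S: "S \<in> carrier_mat d d" and symS: "sym_mat S" using pd unfolding pos_def_def by auto
  obtain c where c: "c > 0" "\<And>v. v \<in> carrier_vec d \<Longrightarrow> c * (v \<bullet> v) \<le> v \<bullet> (S *\<^sub>v v)"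
    using pos_def_coercive[OF pd] by blast
  define M where "M = (\<Sum>i<d. \<Sum>j<d. \<bar>D $$ (i,j)\<bar>) + 1"
  have M: "M > 0" unfolding M_def by (smt (verit) sum_nonneg abs_ge_zero)
  have "pos_def d (S + t \<cdot>\<^sub>m D)" if t: "\<bar>t\<bar> < c / M" for t
    unfolding pos_def_def
  proof (intro conjI ballI impI)
    fix v :: "real vec" assume v: "v \<in> carrier_vec d" "v \<noteq> 0\<^sub>v d"
    have vv: "0 < v \<bullet> v" using scalar_prod_self_pos[OF v] .
    have "\<bar>t * (v \<bullet> (D *\<^sub>v v))\<bar> \<le> \<bar>t\<bar> * (M * (v \<bullet> v))"
      using abs_quadratic_form_le[OF D v(1)] vv unfolding M_def abs_mult
      by (intro mult_left_mono) (auto simp: algebra_simps)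
    also have "\<dots> < c / M * (M * (v \<bullet> v))"
      using t vv M by (intro mult_strict_right_mono) auto
    also have "\<dots> \<le> v \<bullet> (S *\<^sub>v v)" using c(2)[OF v(1)] M by simp
    finally show "0 < v \<bullet> ((S + t \<cdot>\<^sub>m D) *\<^sub>v v)"
      unfolding quadratic_form_add_smult[OF S D v(1)] by linarith
  qed (use S D symS symD sym_mat_add_smult in auto)
  then show ?thesis using that c M by (metis divide_pos_pos)
qed

section \<open>Block-circulant matrices\<close>

lemma index_transpose_mult_mult_unit_cols:
  fixes A X B :: "'a :: comm_semiring_1 mat"
  assumes A: "A \<in> carrier_mat d nx" and X: "X \<in> carrier_mat d d" and B: "B \<in> carrier_mat d ny"
    and xy: "x < nx" "y < ny" "f x < d" "g y < d"
    and Acol: "\<And>p. p < d \<Longrightarrow> A $$ (p, x) = (if p = f x then 1 else 0)"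
    and Bcol: "\<And>q. q < d \<Longrightarrow> B $$ (q, y) = (if q = g y then 1 else 0)"
  shows "(transpose_mat A * X * B) $$ (x, y) = X $$ (f x, g y)"
proof -
  have inner: "(\<Sum>q<d. X $$ (p, q) * B $$ (q, y)) = X $$ (p, g y)" for p
  proof -
    have "(\<Sum>q<d. X $$ (p, q) * B $$ (q, y)) = (\<Sum>q<d. if q = g y then X $$ (p, q) else 0)"
      using Bcol by (intro sum.cong) auto
    then show ?thesis using xy by simp
  qed
  have "(transpose_mat A * X * B) $$ (x, y) = (\<Sum>p<d. A $$ (p, x) * (\<Sum>q<d. X $$ (p, q) * B $$ (q, y)))"
    using A X B xy by (simp add: scalar_prod_def atLeast0LessThan)
  also have "\<dots> = (\<Sum>p<d. if p = f x then X $$ (p, g y) else 0)"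
    unfolding inner using Acol by (intro sum.cong) auto
  finally show ?thesis using xy by simp
qed

lemma index_div_lt: "x < m * N \<Longrightarrow> x div m < N" for x m N :: nat
  by (simp add: less_mult_imp_div_less mult.commute)

lemma block_index_lt: "q < N \<Longrightarrow> b < m \<Longrightarrow> q * m + b < m * N" for q b m N :: nat
proof -
  assume "q < N" "b < m"
  then have "q * m + b < (q + 1) * m" by simp
  also have "\<dots> \<le> m * N" using \<open>q < N\<close> mult_le_mono1[of "q + 1" N m] by (simp add: mult.commute)
  finally show ?thesis .
qed

lemma nat_eq_iff_div_mod: "(x::nat) = y \<longleftrightarrow> x div m = y div m \<and> x mod m = y mod m"
  by (metis div_mult_mod_eq)

definition blk_shift :: "nat \<Rightarrow> nat \<Rightarrow> nat \<Rightarrow> nat" where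
  "blk_shift m N x = ((x div m + 1) mod N) * m + x mod m"

definition blk_unshift :: "nat \<Rightarrow> nat \<Rightarrow> nat \<Rightarrow> nat" where
  "blk_unshift m N x = ((x div m + N - 1) mod N) * m + x mod m"

context
  fixes m N :: nat
  assumes m: "m \<ge> 1" and N: "N \<ge> 1"
begin

lemma blk_shift_div: "blk_shift m N x div m = (x div m + 1) mod N"
  and blk_shift_mod: "blk_shift m N x mod m = x mod m"
  and blk_unshift_div: "blk_unshift m N x div m = (x div m + N - 1) mod N"
  and blk_unshift_mod: "blk_unshift m N x mod m = x mod m"
  using m unfolding blk_shift_def blk_unshift_def by simp_all

lemma blk_shift_lt: "blk_shift m N x < m * N"
  and blk_unshift_lt: "blk_unshift m N x < m * N"
  unfolding blk_shift_def blk_unshift_def using m N by (auto intro!: block_index_lt)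

lemma blk_shift_unshift: "x < m * N \<Longrightarrow> blk_shift m N (blk_unshift m N x) = x"
  and blk_unshift_shift: "x < m * N \<Longrightarrow> blk_unshift m N (blk_shift m N x) = x"
proof -
  assume "x < m * N"
  then have q: "x div m < N" by (rule index_div_lt)
  have "((x div m + N - 1) mod N + 1) mod N = (x div m + N - 1 + 1) mod N"
    by (rule mod_add_left_eq)
  moreover have "((x div m + 1) mod N + (N - 1)) mod N = (x div m + 1 + (N - 1)) mod N"
    by (rule mod_add_left_eq)
  ultimately have "((x div m + N - 1) mod N + 1) mod N = x div m"
    "((x div m + 1) mod N + N - 1) mod N = x div m"
    using q N by simp_all
  then show "blk_shift m N (blk_unshift m N x) = x" "blk_unshift m N (blk_shift m N x) = x"
    by (subst nat_eq_iff_div_mod[of _ _ m],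
        simp add: blk_shift_div blk_shift_mod blk_unshift_div blk_unshift_mod)+
qed

lemma U_mat_carrier: "U_mat m N \<in> carrier_mat (m * N) (m * N)"
  unfolding U_mat_def by simp

lemma U_mat_entry:
  assumes "p < m * N" "x < m * N"
  shows "U_mat m N $$ (p, x) = (if p = blk_unshift m N x then 1 else 0)"
proof -
  have "(x div m = (p div m + 1) mod N \<and> x mod m = p mod m) \<longleftrightarrow> x = blk_shift m N p"
    by (subst nat_eq_iff_div_mod[of x _ m]) (simp add: blk_shift_div blk_shift_mod)
  also have "\<dots> \<longleftrightarrow> p = blk_unshift m N x"
    using assms blk_shift_unshift blk_unshift_shift by auto
  finally show ?thesis unfolding U_mat_def using assms by simp
qed

lemma index_U_conj:
  assumes "X \<in> carrier_mat (m * N) (m * N)" "x < m * N" "y < m * N"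
  shows "(transpose_mat (U_mat m N) * X * U_mat m N) $$ (x, y) = X $$ (blk_unshift m N x, blk_unshift m N y)"
  using assms U_mat_entry
  by (intro index_transpose_mult_mult_unit_cols[OF U_mat_carrier _ U_mat_carrier]) (auto simp: blk_unshift_lt)

lemma block_circulant_iff_shift:
  assumes X: "X \<in> carrier_mat (m * N) (m * N)"
  shows "block_circulant m N X \<longleftrightarrow>
    (\<forall>x < m * N. \<forall>y < m * N. X $$ (blk_shift m N x, blk_shift m N y) = X $$ (x, y))"
proof
  assume circ: "block_circulant m N X"
  show "\<forall>x < m * N. \<forall>y < m * N. X $$ (blk_shift m N x, blk_shift m N y) = X $$ (x, y)"
  proof (intro allI impI)
    fix x y assume "x < m * N" "y < m * N"
    then show "X $$ (blk_shift m N x, blk_shift m N y) = X $$ (x, y)"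
      using circ index_U_conj[OF X blk_shift_lt blk_shift_lt]
      unfolding block_circulant_def by (simp add: blk_unshift_shift)
  qed
next
  assume shift: "\<forall>x < m * N. \<forall>y < m * N. X $$ (blk_shift m N x, blk_shift m N y) = X $$ (x, y)"
  show "block_circulant m N X"
    unfolding block_circulant_def
  proof (rule eq_matI)
    fix x y assume "x < dim_row X" "y < dim_col X"
    then have "x < m * N" "y < m * N" using X by auto
    then show "(transpose_mat (U_mat m N) * X * U_mat m N) $$ (x, y) = X $$ (x, y)"
      using shift[rule_format, OF blk_unshift_lt blk_unshift_lt, of x y]
      by (simp add: index_U_conj[OF X] blk_shift_unshift)
  qed (use X U_mat_carrier in auto)
qed

lemma U_mat_orthogonal:
  "transpose_mat (U_mat m N) * U_mat m N = 1\<^sub>m (m * N)"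
  "U_mat m N * transpose_mat (U_mat m N) = 1\<^sub>m (m * N)"
proof -
  have "block_circulant m N (1\<^sub>m (m * N))"
  proof (subst block_circulant_iff_shift[OF one_carrier_mat], intro allI impI)
    fix x y assume xy: "x < m * N" "y < m * N"
    then have "blk_shift m N x = blk_shift m N y \<longleftrightarrow> x = y"
      by (metis blk_unshift_shift)
    then show "1\<^sub>m (m * N) $$ (blk_shift m N x, blk_shift m N y) = 1\<^sub>m (m * N) $$ (x, y)"
      using xy blk_shift_lt by simp
  qed
  then show "transpose_mat (U_mat m N) * U_mat m N = 1\<^sub>m (m * N)"
    unfolding block_circulant_def using U_mat_carrier by simp
  then show "U_mat m N * transpose_mat (U_mat m N) = 1\<^sub>m (m * N)"
    using mat_mult_left_right_inverse[OF transpose_carrier_mat[THEN iffD2, OF U_mat_carrier] U_mat_carrier]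
    by simp
qed

end

lemma orthogonal_conj_inverse:
  fixes Q S K :: "'a :: comm_ring_1 mat"
  assumes Q: "Q \<in> carrier_mat d d" and S: "S \<in> carrier_mat d d" and K: "K \<in> carrier_mat d d"
    and QQ: "transpose_mat Q * Q = 1\<^sub>m d" "Q * transpose_mat Q = 1\<^sub>m d"
    and SQ: "transpose_mat Q * S * Q = S" and KS: "K * S = 1\<^sub>m d" and SK: "S * K = 1\<^sub>m d"
  shows "transpose_mat Q * K * Q = K"
proof -
  have QT: "transpose_mat Q \<in> carrier_mat d d" using Q by simp
  have "transpose_mat Q * K * Q * S = transpose_mat Q * K * (Q * transpose_mat Q) * S * Q"
    using SQ Q QT S K by (simp add: assoc_mult_mat[of _ d d _ d _ d])
  also have "\<dots> = transpose_mat Q * Q"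
    using QQ(2) KS Q QT S K by (simp add: assoc_mult_mat[of _ d d _ d _ d])
  finally have "transpose_mat Q * K * Q * S = 1\<^sub>m d" using QQ(1) by simp
  then have "transpose_mat Q * K * Q * S * K = K" using QT K by simp
  then show ?thesis using SK Q QT S K by (simp add: assoc_mult_mat[of _ d d _ d _ d])
qed

lemma E_conj_index:
  assumes "X \<in> carrier_mat (m * N) (m * N)" "x < m * (n + 1)" "y < m * (n + 1)" "m * (n + 1) \<le> m * N"
  shows "(transpose_mat (E_mat m N n) * X * E_mat m N n) $$ (x, y) = X $$ (x, y)"
proof -
  have "E_mat m N n $$ (p, z) = (if p = z then 1 else 0)" if "p < m * N" "z < m * (n + 1)" for p z
    using that nat_eq_iff_div_mod[of p z m] unfolding E_mat_def by auto
  then show ?thesis using assms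
    by (intro index_transpose_mult_mult_unit_cols[where d = "m * N" and nx = "m * (n + 1)"
          and ny = "m * (n + 1)" and f = id and g = id, simplified])
      (auto simp: E_mat_def)
qed

lemma Suc_mod_eq_Suc_mod_iff:
  fixes a c N :: nat
  assumes "N \<ge> 1"
  shows "(a + 1) mod N = (c + 1) mod N \<longleftrightarrow> a mod N = c mod N"
proof
  assume "(a + 1) mod N = (c + 1) mod N"
  then have "(a + 1 + (N - 1)) mod N = (c + 1 + (N - 1)) mod N" by (metis mod_add_left_eq)
  then show "a mod N = c mod N" using assms by simp
qed (metis mod_add_left_eq)

lemma block_circulant_diagonal_const:
  assumes m: "m \<ge> 1" and N: "N \<ge> 1" and X: "X \<in> carrier_mat (m * N) (m * N)"
    and circ: "block_circulant m N X" and a: "a < m" and b: "b < m"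
  shows "X $$ ((t mod N) * m + a, ((t + k) mod N) * m + b) = X $$ (a, (k mod N) * m + b)"
proof (induction t)
  case (Suc t)
  let ?p = "(t mod N) * m + a" and ?q = "((t + k) mod N) * m + b"
  have "?p < m * N" "?q < m * N" using a b N by (auto intro!: block_index_lt)
  moreover have "blk_shift m N ?p = (Suc t mod N) * m + a" "blk_shift m N ?q = ((Suc t + k) mod N) * m + b"
    unfolding blk_shift_def using a b by (simp_all add: mod_Suc_eq)
  ultimately show ?case
    using Suc block_circulant_iff_shift[OF m N X] circ by metis
qed simp

definition blk_offset :: "nat \<Rightarrow> nat \<Rightarrow> nat \<Rightarrow> nat \<Rightarrow> nat \<Rightarrow> nat" where
  "blk_offset m N k b y = ((y div m + k) mod N) * m + b"

text \<open>The direction of perturbation: the symmetric \<open>0/1\<close> matrix whose nonzero entries are the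
  entries \<open>(a, b)\<close> of the blocks \<open>(i, i + k mod N)\<close> and their transposes.\<close>
definition offdiag_pattern :: "nat \<Rightarrow> nat \<Rightarrow> nat \<Rightarrow> nat \<Rightarrow> nat \<Rightarrow> real mat" where
  "offdiag_pattern m N k a b = mat (m * N) (m * N) (\<lambda>(y, x).
     of_bool (y mod m = a \<and> x = blk_offset m N k b y) + of_bool (x mod m = a \<and> y = blk_offset m N k b x))"

lemma blk_offset_lt: "m \<ge> 1 \<Longrightarrow> N \<ge> 1 \<Longrightarrow> b < m \<Longrightarrow> blk_offset m N k b y < m * N"
  unfolding blk_offset_def by (intro block_index_lt) auto

lemma blk_shift_eq_blk_offset_iff:
  assumes m: "m \<ge> 1" and N: "N \<ge> 1" and b: "b < m" and x: "x < m * N"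
  shows "blk_shift m N x = blk_offset m N k b (blk_shift m N y) \<longleftrightarrow> x = blk_offset m N k b y"
proof -
  have "((y div m + 1) mod N + k) mod N = (y div m + k + 1) mod N"
    using mod_add_left_eq[of "y div m + 1" N k] by (simp add: ac_simps)
  then have "blk_shift m N x = blk_offset m N k b (blk_shift m N y) \<longleftrightarrow>
      (x div m + 1) mod N = (y div m + k + 1) mod N \<and> x mod m = b"
    using b by (subst nat_eq_iff_div_mod[of _ _ m]) (simp add: blk_shift_div[OF m N] blk_shift_mod[OF m N] blk_offset_def)
  also have "\<dots> \<longleftrightarrow> x div m = (y div m + k) mod N \<and> x mod m = b"
    using Suc_mod_eq_Suc_mod_iff[OF N] index_div_lt[OF x] by simp
  also have "\<dots> \<longleftrightarrow> x = blk_offset m N k b y"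
    using b by (subst nat_eq_iff_div_mod[of x _ m]) (simp add: blk_offset_def)
  finally show ?thesis .
qed

lemma offdiag_pattern_carrier: "offdiag_pattern m N k a b \<in> carrier_mat (m * N) (m * N)"
  unfolding offdiag_pattern_def by simp

lemma offdiag_pattern_sym: "sym_mat (offdiag_pattern m N k a b)"
  unfolding sym_mat_def offdiag_pattern_def by (intro eq_matI) auto

lemma offdiag_pattern_block_circulant:
  assumes "m \<ge> 1" "N \<ge> 1" "b < m"
  shows "block_circulant m N (offdiag_pattern m N k a b)"
  using assms
  by (subst block_circulant_iff_shift)
    (auto simp: offdiag_pattern_def blk_shift_lt blk_shift_mod blk_shift_eq_blk_offset_iff)

lemma offdiag_pattern_corner_zero:
  assumes "m \<ge> 1" "b < m" "n < k" "k + n < N" "x < m * (n + 1)" "y < m * (n + 1)"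
  shows "offdiag_pattern m N k a b $$ (x, y) = 0"
proof -
  have "z \<noteq> blk_offset m N k b w" if "z < m * (n + 1)" "w < m * (n + 1)" for z w
  proof
    assume "z = blk_offset m N k b w"
    then have "z div m = w div m + k"
      using assms index_div_lt[OF that(2)] by (simp add: blk_offset_def)
    then show False using assms index_div_lt[OF that(1)] by simp
  qed
  moreover have "m * (n + 1) \<le> m * N" using assms by (intro mult_le_mono2) linarith
  ultimately show ?thesis using assms unfolding offdiag_pattern_def by auto
qed

lemma block_circulant_offset_entry:
  fixes K :: "real mat"
  assumes m: "m \<ge> 1" and N: "N \<ge> 1" and K: "K \<in> carrier_mat (m * N) (m * N)"
    and circK: "block_circulant m N K" and b: "b < m" and z: "z < m * N"
  shows "K $$ (z, blk_offset m N k b z) = K $$ (z mod m, (k mod N) * m + b)"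
proof -
  have "z div m mod N = z div m" using index_div_lt[OF z] by simp
  then have "(z div m mod N) * m + z mod m = z" using div_mult_mod_eq[of z m] by simp
  then have "K $$ (z, blk_offset m N k b z) = K $$ ((z div m mod N) * m + z mod m, ((z div m + k) mod N) * m + b)"
    unfolding blk_offset_def by simp
  also have "\<dots> = K $$ (z mod m, (k mod N) * m + b)"
    using m by (intro block_circulant_diagonal_const[OF m N K circK _ b]) simp
  finally show ?thesis .
qed

lemma trace_mult_offdiag_pattern:
  fixes K :: "real mat"
  assumes m: "m \<ge> 1" and N: "N \<ge> 1" and K: "K \<in> carrier_mat (m * N) (m * N)"
    and symK: "sym_mat K" and circK: "block_circulant m N K"
    and r: "r < m * N" and b: "b < m"
  defines "a \<equiv> r mod m"
  shows "(\<Sum>x < m * N. (K * offdiag_pattern m N k a b) $$ (x, x)) =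
    2 * K $$ (r, blk_offset m N k b r) * card {z. z < m * N \<and> z mod m = a}"
proof -
  let ?d = "m * N" and ?D = "offdiag_pattern m N k a b" and ?c = "K $$ (r, blk_offset m N k b r)"
  let ?pat = "\<lambda>y x. of_bool (y mod m = a \<and> x = blk_offset m N k b y) :: real"
  have row: "(\<Sum>x < ?d. K $$ (z, x) * ?pat z x) = of_bool (z mod m = a) * ?c" if "z < ?d" for z
  proof -
    have "(\<Sum>x < ?d. K $$ (z, x) * ?pat z x) = (\<Sum>x < ?d. if x = blk_offset m N k b z then of_bool (z mod m = a) * K $$ (z, x) else 0)"
      by (intro sum.cong) auto
    also have "\<dots> = of_bool (z mod m = a) * K $$ (z, blk_offset m N k b z)"
      using blk_offset_lt[OF m N b] by simp
    finally show ?thesis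
      using block_circulant_offset_entry[OF m N K circK b] that r unfolding a_def by auto
  qed
  have "(\<Sum>x < ?d. (K * ?D) $$ (x, x)) = (\<Sum>x < ?d. \<Sum>z < ?d. K $$ (x, z) * ?D $$ (z, x))"
    using K by (intro sum.cong) (auto simp: offdiag_pattern_def scalar_prod_def atLeast0LessThan)
  also have "\<dots> = (\<Sum>x < ?d. \<Sum>z < ?d. K $$ (z, x) * ?pat z x) + (\<Sum>x < ?d. \<Sum>z < ?d. K $$ (x, z) * ?pat x z)"
    unfolding sum.distrib[symmetric]
  proof (intro sum.cong refl)
    fix x z assume "x \<in> {..<?d}" "z \<in> {..<?d}"
    then show "K $$ (x, z) * ?D $$ (z, x) = K $$ (z, x) * ?pat z x + K $$ (x, z) * ?pat x z"
      using sym_mat_entry[OF symK K, of x z] by (simp add: offdiag_pattern_def algebra_simps)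
  qed
  also have "\<dots> = 2 * (\<Sum>z < ?d. of_bool (z mod m = a) * ?c)"
  proof -
    have swap: "(\<Sum>x < ?d. \<Sum>z < ?d. K $$ (z, x) * ?pat z x) = (\<Sum>z < ?d. \<Sum>x < ?d. K $$ (z, x) * ?pat z x)"
      by (rule sum.swap)
    have rows: "(\<Sum>z < ?d. \<Sum>x < ?d. K $$ (z, x) * ?pat z x) = (\<Sum>z < ?d. of_bool (z mod m = a) * ?c)"
      using row by simp
    show ?thesis unfolding swap rows by simp
  qed
  finally show ?thesis by (simp add: sum_distrib_right[symmetric] sum_of_bool_eq Int_def)
qed

section \<open>The inverse of a maximum entropy covariance is banded\<close>

lemma has_real_derivative_nonzero_exceeds:
  assumes f: "(f has_real_derivative f') (at 0)" and "f' \<noteq> 0" and "\<delta> > 0"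
  obtains t where "\<bar>t\<bar> < \<delta>" "f t > f 0"
proof (cases "f' > 0")
  case True
  obtain e where "e > 0" "\<And>h. 0 < h \<Longrightarrow> h < e \<Longrightarrow> f 0 < f (0 + h)"
    using DERIV_pos_inc_right[OF f True] by blast
  then show ?thesis using that[of "min e \<delta> / 2"] \<open>\<delta> > 0\<close> by auto
next
  case False
  then have "f' < 0" using \<open>f' \<noteq> 0\<close> by simp
  then obtain e where "e > 0" "\<And>h. 0 < h \<Longrightarrow> h < e \<Longrightarrow> f 0 < f (0 - h)"
    using DERIV_neg_dec_left[OF f] by blast
  then show ?thesis using that[of "- (min e \<delta> / 2)"] \<open>\<delta> > 0\<close> by auto
qed

lemma block_circulant_add_smult:
  assumes "m \<ge> 1" "N \<ge> 1" "A \<in> carrier_mat (m * N) (m * N)" "B \<in> carrier_mat (m * N) (m * N)"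
    and "block_circulant m N A" "block_circulant m N B"
  shows "block_circulant m N (A + t \<cdot>\<^sub>m B)"
  using assms by (simp add: block_circulant_iff_shift blk_shift_lt)

lemma MEP_feasible_add_smult:
  assumes feas: "MEP_feasible m N n Sig S" and "m \<ge> 1" "n < N"
    and D: "D \<in> carrier_mat (m * N) (m * N)" and circD: "block_circulant m N D"
    and corner: "\<And>x y. x < m * (n + 1) \<Longrightarrow> y < m * (n + 1) \<Longrightarrow> D $$ (x, y) = 0"
    and pd: "pos_def (m * N) (S + t \<cdot>\<^sub>m D)"
  shows "MEP_feasible m N n Sig (S + t \<cdot>\<^sub>m D)"
proof -
  have S: "S \<in> carrier_mat (m * N) (m * N)" and circS: "block_circulant m N S"
    and ES: "transpose_mat (E_mat m N n) * S * E_mat m N n = block_toeplitz m n Sig"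
    using feas unfolding MEP_feasible_def pos_def_def block_circulant_def by auto
  have corner_le: "m * (n + 1) \<le> m * N" using \<open>n < N\<close> by (intro mult_le_mono2) simp
  have "transpose_mat (E_mat m N n) * (S + t \<cdot>\<^sub>m D) * E_mat m N n = transpose_mat (E_mat m N n) * S * E_mat m N n"
  proof (rule eq_matI)
    fix x y assume "x < dim_row (transpose_mat (E_mat m N n) * S * E_mat m N n)"
      "y < dim_col (transpose_mat (E_mat m N n) * S * E_mat m N n)"
    then have "x < m * (n + 1)" "y < m * (n + 1)" by (simp_all add: E_mat_def)
    then show "(transpose_mat (E_mat m N n) * (S + t \<cdot>\<^sub>m D) * E_mat m N n) $$ (x, y) =
        (transpose_mat (E_mat m N n) * S * E_mat m N n) $$ (x, y)"
      using S D corner corner_le E_conj_index[OF _ _ _ corner_le] by simp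
  qed (simp_all add: E_mat_def)
  moreover have "block_circulant m N (S + t \<cdot>\<^sub>m D)"
    using block_circulant_add_smult[OF _ _ S D circS circD] assms by auto
  ultimately show ?thesis using ES pd unfolding MEP_feasible_def block_circulant_def by simp
qed

text \<open>The first-order optimality condition: \<open>tr (S\<inverse> D)\<close> is the derivative of \<open>log det\<close> at \<open>S\<close>
  in the feasible direction \<open>D\<close>.\<close>
lemma MEP_minimizer_trace_zero:
  fixes S K D :: "real mat"
  assumes opt: "MEP_minimizer m N n Sig S" and "m \<ge> 1" "n < N"
    and K: "K \<in> carrier_mat (m * N) (m * N)" and SK: "S * K = 1\<^sub>m (m * N)"
    and D: "D \<in> carrier_mat (m * N) (m * N)" and symD: "sym_mat D" and circD: "block_circulant m N D"
    and corner: "\<And>x y. x < m * (n + 1) \<Longrightarrow> y < m * (n + 1) \<Longrightarrow> D $$ (x, y) = 0"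
  shows "(\<Sum>x < m * N. (K * D) $$ (x, x)) = 0"
proof (rule ccontr)
  assume trace: "(\<Sum>x < m * N. (K * D) $$ (x, x)) \<noteq> 0"
  let ?d = "m * N" and ?f = "\<lambda>t. det (1\<^sub>m (m * N) + t \<cdot>\<^sub>m (K * D))"
  have feas: "MEP_feasible m N n Sig S" using opt unfolding MEP_minimizer_def by simp
  then have pd: "pos_def ?d S" unfolding MEP_feasible_def by simp
  then have S: "S \<in> carrier_mat ?d ?d" unfolding pos_def_def by simp
  have KD: "K * D \<in> carrier_mat ?d ?d" using K D by simp
  obtain \<delta> where "\<delta> > 0" and pd': "\<And>t. \<bar>t\<bar> < \<delta> \<Longrightarrow> pos_def ?d (S + t \<cdot>\<^sub>m D)"
    using pos_def_add_smult[OF pd D symD] by blast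
  then obtain t where t: "\<bar>t\<bar> < \<delta>" "?f t > ?f 0"
    using has_real_derivative_nonzero_exceeds[OF has_derivative_det_one_plus_smult[OF KD] trace] by blast
  have "1\<^sub>m ?d + 0 \<cdot>\<^sub>m (K * D) = 1\<^sub>m ?d" using K D by (intro eq_matI) auto
  then have f_gt: "?f t > 1" using t by simp
  have "S * (K * D) = D" using assoc_mult_mat[OF S K D, symmetric] SK D by simp
  then have "S * (1\<^sub>m ?d + t \<cdot>\<^sub>m (K * D)) = S + t \<cdot>\<^sub>m D"
    using mult_add_distrib_mat[of S ?d ?d "1\<^sub>m ?d" ?d "t \<cdot>\<^sub>m (K * D)"] mult_smult_distrib[OF S KD] S KD
    by simp
  then have "det (S + t \<cdot>\<^sub>m D) = det S * ?f t"
    using det_mult[OF S, of "1\<^sub>m ?d + t \<cdot>\<^sub>m (K * D)"] KD by simp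
  moreover have "det S > 0" using pos_def_det_pos[OF pd] .
  ultimately have "ln (det S) < ln (det (S + t \<cdot>\<^sub>m D))" using f_gt by simp
  moreover have "MEP_feasible m N n Sig (S + t \<cdot>\<^sub>m D)"
    using MEP_feasible_add_smult[OF feas _ _ D circD corner pd'[OF t(1)]] assms by blast
  ultimately show False using opt unfolding MEP_minimizer_def by fastforce
qed

lemma cyc_dist_gt_imp_offset:
  fixes i j N n :: nat
  assumes i: "i < N" and j: "j < N" and dist: "n < cyc_dist N i j"
  obtains k where "(i + k) mod N = j" "n < k" "k + n < N"
proof -
  define k where "k = nat ((int j - int i) mod int N)"
  have dist': "n < nat ((int i - int j) mod int N)" "n < k"
    using dist unfolding cyc_dist_def k_def by auto
  show ?thesis
  proof (cases "i \<le> j")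
    case True
    then have "k = j - i" unfolding k_def using j by (simp add: of_nat_diff)
    moreover have "i \<noteq> j" using dist'(1) by auto
    then have "(int i - int j) mod int N = int i - int j + int N"
      using True j mod_pos_pos_trivial[of "int i - int j + int N" "int N"] by simp
    ultimately show ?thesis using that[of k] True j dist' by auto
  next
    case False
    have "(int j - int i) mod int N = int j - int i + int N"
      using False i mod_pos_pos_trivial[of "int j - int i + int N" "int N"] by simp
    then have "k = N + j - i" unfolding k_def using False i by simp
    moreover have "(int i - int j) mod int N = int i - int j"
      using False i by (intro mod_pos_pos_trivial) auto
    ultimately show ?thesis using that[of k] False i j dist' by auto
  qed
qed

lemma MEP_minimizer_inverse_banded:
  fixes S K :: "real mat"
  assumes opt: "MEP_minimizer m N n Sig S"
    and K: "K \<in> carrier_mat (m * N) (m * N)" and SK: "S * K = 1\<^sub>m (m * N)"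
    and symK: "sym_mat K" and circK: "block_circulant m N K"
  shows "banded m N n K"
  unfolding banded_def
proof (intro allI impI)
  fix r c assume r: "r < m * N" and c: "c < m * N" and dist: "n < cyc_dist N (r div m) (c div m)"
  then have "0 < m * N" by linarith
  then have m: "m \<ge> 1" and N: "N \<ge> 1" unfolding nat_0_less_mult_iff by simp_all
  obtain k where k: "(r div m + k) mod N = c div m" "n < k" "k + n < N"
    using cyc_dist_gt_imp_offset[OF index_div_lt[OF r] index_div_lt[OF c] dist] by blast
  define b where "b = c mod m"
  have b: "b < m" unfolding b_def using m by simp
  have c_eq: "c = blk_offset m N k b r"
    unfolding blk_offset_def b_def k(1) by simp
  let ?D = "offdiag_pattern m N k (r mod m) b"
  have "(\<Sum>x < m * N. (K * ?D) $$ (x, x)) = 0"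
    using k offdiag_pattern_corner_zero[OF m b k(2,3)]
    by (intro MEP_minimizer_trace_zero[OF opt m _ K SK offdiag_pattern_carrier offdiag_pattern_sym
          offdiag_pattern_block_circulant[OF m N b]]) auto
  moreover have "card {z. z < m * N \<and> z mod m = r mod m} > 0"
    using r by (auto simp: card_gt_0_iff)
  ultimately show "K $$ (r, c) = 0"
    using trace_mult_offdiag_pattern[OF m N K symK circK r b] c_eq r by auto
qed

section \<open>Banded inverses and reciprocity\<close>

lemma entry_via_inverse_restricted:
  fixes S K :: "real mat"
  assumes S: "S \<in> carrier_mat d d" and K: "K \<in> carrier_mat d d" and KS: "K * S = 1\<^sub>m d"
    and sparse: "\<And>z w. z < d \<Longrightarrow> w < d \<Longrightarrow> P z \<Longrightarrow> \<not> P w \<Longrightarrow> \<not> R w \<Longrightarrow> K $$ (z, w) = 0"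
    and v: "v \<in> carrier_vec d" and Sv: "\<And>w. w < d \<Longrightarrow> R w \<Longrightarrow> (S *\<^sub>v v) $ w = 0"
    and z: "z < d" "P z"
  shows "v $ z = (\<Sum>w \<in> {w. w < d \<and> P w}. K $$ (z, w) * (S *\<^sub>v v) $ w)"
proof -
  have "v = K *\<^sub>v (S *\<^sub>v v)" using K S KS v by (simp flip: assoc_mult_mat_vec)
  then have "v $ z = (K *\<^sub>v (S *\<^sub>v v)) $ z" by simp
  also have "\<dots> = (\<Sum>w < d. K $$ (z, w) * (S *\<^sub>v v) $ w)"
    using K S v z by (simp add: scalar_prod_def atLeast0LessThan)
  also have "\<dots> = (\<Sum>w \<in> {w. w < d \<and> P w}. K $$ (z, w) * (S *\<^sub>v v) $ w)"
    using sparse[OF z(1) _ z(2)] Sv by (intro sum.mono_neutral_right) auto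
  finally show ?thesis .
qed

text \<open>In the language of second-order processes with covariance \<open>S\<close>: \<open>P\<close> and the complement of
  \<open>P \<union> R\<close> are conditionally orthogonal given \<open>R\<close>, \<open>x\<close> and \<open>y\<close> being residuals of projections onto
  the span of \<open>R\<close>.\<close>
lemma inverse_sparsity_orthogonal:
  fixes S K :: "real mat"
  assumes S: "S \<in> carrier_mat d d" and K: "K \<in> carrier_mat d d" and KS: "K * S = 1\<^sub>m d"
    and symK: "sym_mat K"
    and sparse: "\<And>z w. z < d \<Longrightarrow> w < d \<Longrightarrow> P z \<Longrightarrow> \<not> P w \<Longrightarrow> \<not> R w \<Longrightarrow> K $$ (z, w) = 0"
    and x: "x \<in> carrier_vec d" and x0: "\<And>z. z < d \<Longrightarrow> \<not> P z \<Longrightarrow> \<not> R z \<Longrightarrow> x $ z = 0"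
    and Sx: "\<And>z. z < d \<Longrightarrow> R z \<Longrightarrow> (S *\<^sub>v x) $ z = 0"
    and y: "y \<in> carrier_vec d" and y0: "\<And>z. z < d \<Longrightarrow> P z \<Longrightarrow> y $ z = 0"
    and Sy: "\<And>z. z < d \<Longrightarrow> R z \<Longrightarrow> (S *\<^sub>v y) $ z = 0"
  shows "x \<bullet> (S *\<^sub>v y) = 0"
proof -
  let ?I = "{w. w < d \<and> P w}" and ?g = "S *\<^sub>v x" and ?h = "S *\<^sub>v y"
  have restricted: "v $ z = (\<Sum>w \<in> ?I. K $$ (z, w) * (S *\<^sub>v v) $ w)"
    if "v \<in> carrier_vec d" "\<And>w. w < d \<Longrightarrow> R w \<Longrightarrow> (S *\<^sub>v v) $ w = 0" "z < d" "P z" for v z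
    using that sparse by (intro entry_via_inverse_restricted[OF S K KS]) auto
  have "x \<bullet> ?h = (\<Sum>z < d. x $ z * ?h $ z)"
    using x S by (simp add: scalar_prod_def atLeast0LessThan)
  also have "\<dots> = (\<Sum>z \<in> ?I. x $ z * ?h $ z)"
    using x0 Sy by (intro sum.mono_neutral_right) auto
  also have "\<dots> = (\<Sum>z \<in> ?I. \<Sum>w \<in> ?I. K $$ (z, w) * ?g $ w * ?h $ z)"
    using restricted[OF x Sx] by (simp add: sum_distrib_right)
  also have "\<dots> = (\<Sum>w \<in> ?I. ?g $ w * (\<Sum>z \<in> ?I. K $$ (w, z) * ?h $ z))"
    using sym_mat_entry[OF symK K] by (subst sum.swap) (simp add: sum_distrib_left ac_simps)
  also have "\<dots> = (\<Sum>w \<in> ?I. ?g $ w * y $ w)"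
    using restricted[OF y Sy] by simp
  also have "\<dots> = 0" using y0 by simp
  finally show ?thesis .
qed

lemma int_mod_diff_common_shift:
  fixes t a b N :: nat
  assumes "N > 0"
  shows "(int ((t + b) mod N) - int ((t + a) mod N)) mod int N = (int b - int a) mod int N"
proof -
  have "(int ((t + b) mod N) - int ((t + a) mod N)) mod int N
      = (int (t + b) mod int N - int (t + a) mod int N) mod int N"
    by (simp add: of_nat_mod)
  also have "\<dots> = (int (t + b) - int (t + a)) mod int N" by (simp add: mod_diff_eq)
  finally show ?thesis by simp
qed

lemma cyc_dist_from_offsets:
  fixes N n t i j \<alpha> \<beta> :: nat
  assumes "(t + \<alpha>) mod N = i" "(t + \<beta>) mod N = j" "0 < \<alpha>" "\<alpha> + n < \<beta>" "\<beta> + n \<le> N"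
  shows "n < cyc_dist N i j"
proof -
  have N: "N > 0" using assms by linarith
  have "(int j - int i) mod int N = (int \<beta> - int \<alpha>) mod int N"
    using int_mod_diff_common_shift[OF N, of t \<beta> \<alpha>] assms by simp
  also have "\<dots> = int \<beta> - int \<alpha>" using assms by (intro mod_pos_pos_trivial) auto
  finally have ji: "(int j - int i) mod int N = int \<beta> - int \<alpha>" .
  have "(int i - int j) mod int N = (int \<alpha> - int \<beta> + int N) mod int N"
    using int_mod_diff_common_shift[OF N, of t \<alpha> \<beta>] assms by simp
  also have "\<dots> = int \<alpha> - int \<beta> + int N" using assms by (intro mod_pos_pos_trivial) auto
  finally show ?thesis unfolding cyc_dist_def ji using assms by auto
qed

lemma cyclic_offset_inverse:
  fixes t j N :: nat
  assumes "t < N" "j < N"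
  shows "(t + (j + N - t) mod N) mod N = j"
proof -
  have "(t + (j + N - t) mod N) mod N = (t + (j + N - t)) mod N" by (rule mod_add_right_eq)
  also have "t + (j + N - t) = j + N" using assms by simp
  finally show ?thesis using assms by simp
qed

lemma cyclic_sub_complement:
  fixes t b N :: nat
  assumes "b < N"
  shows "nat ((int t - int (N - b)) mod int N) = (t + b) mod N"
proof -
  have "int t - int (N - b) = int (t + b) + (- 1) * int N" using assms by simp
  then have "(int t - int (N - b)) mod int N = int (t + b) mod int N" by (simp only: mod_mult_self1)
  then have "(int t - int (N - b)) mod int N = int ((t + b) mod N)" by (simp only: of_nat_mod)
  then show ?thesis by simp
qed

lemma cyclic_offset_from_second:
  fixes t1 t2 b N :: nat
  assumes "t1 < N" "(t2 + N - t1) mod N \<le> b"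
  shows "(t2 + (b - (t2 + N - t1) mod N)) mod N = (t1 + b) mod N"
proof -
  let ?g = "(t2 + N - t1) mod N"
  have "int ((t2 + (b - ?g)) mod N) = (int t2 + int b - (int t2 + int N - int t1) mod int N) mod int N"
    using assms by (simp add: of_nat_mod of_nat_diff)
  also have "\<dots> = (int t2 + int b - (int t2 + int N - int t1)) mod int N"
    by (simp add: mod_diff_right_eq)
  also have "int t2 + int b - (int t2 + int N - int t1) = int t1 + int b + (- 1) * int N" by simp
  also have "(int t1 + int b + (- 1) * int N) mod int N = int ((t1 + b) mod N)"
    by (simp only: mod_mult_self1 of_nat_mod of_nat_add)
  finally show ?thesis by simp
qed

lemma cyclic_gap_Suc:
  fixes t1 t2 N :: nat
  assumes "t1 < N" "t2 < N" "t1 \<noteq> t2"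
  shows "(t2 + N - t1 - 1) mod N + 1 = (t2 + N - t1) mod N"
proof (cases "t2 < t1")
  case True
  then show ?thesis using assms by simp
next
  case False
  then have "t2 + N - t1 = (t2 - t1) + N" "t2 + N - t1 - 1 = (t2 - t1 - 1) + N" "t1 < t2"
    using assms by auto
  then show ?thesis using assms by (simp only: mod_add_self2) simp
qed

text \<open>Positions are measured as offsets from \<open>t1\<close>: the open interval occupies the offsets
  \<open>1, \<dots>, g - 1\<close> with \<open>g\<close> the offset of \<open>t2\<close>, and the boundary the offsets \<open>g, \<dots>, g + n - 1\<close>
  and \<open>N - n + 1, \<dots>, N - 1, 0\<close>.\<close>
lemma cyc_dist_open_outside_boundary:
  fixes N n t1 t2 i j :: nat
  assumes n: "n \<ge> 1" and t1: "t1 < N" and t2: "t2 < N" and j: "j < N"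
    and i_open: "i \<in> cyc_open N t1 t2"
    and j_open: "j \<notin> cyc_open N t1 t2" and j_bdry: "j \<notin> cyc_boundary N n t1 t2"
  shows "n < cyc_dist N i j"
proof -
  define len where "len = (t2 + N - t1 - 1) mod N + 1"
  define gap where "gap = (t2 + N - t1) mod N"
  define \<beta> where "\<beta> = (j + N - t1) mod N"
  obtain \<alpha> where \<alpha>: "(t1 + \<alpha>) mod N = i" "0 < \<alpha>" "\<alpha> < len"
    using i_open unfolding cyc_open_def Let_def len_def by blast
  have \<beta>: "(t1 + \<beta>) mod N = j" "\<beta> < N"
    unfolding \<beta>_def using cyclic_offset_inverse[OF t1 j] t1 by simp_all
  have "\<beta> \<noteq> 0"
  proof
    assume "\<beta> = 0"
    then have "j = nat ((int t1 - int 0) mod int N)" using \<beta> t1 by simp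
    moreover have "(0::nat) < n" using n by simp
    ultimately show False using j_bdry unfolding cyc_boundary_def by blast
  qed
  have "\<not> \<beta> < len"
  proof
    assume "\<beta> < len"
    then have "j \<in> cyc_open N t1 t2"
      unfolding cyc_open_def Let_def len_def[symmetric] using \<beta>(1) \<open>\<beta> \<noteq> 0\<close> by blast
    then show False using j_open by simp
  qed
  then have len_le: "len \<le> \<beta>" by simp
  then have "t1 \<noteq> t2" using \<beta>(2) unfolding len_def by auto
  then have len_gap: "len = gap" unfolding len_def gap_def using cyclic_gap_Suc[OF t1 t2] by simp
  have "\<beta> + n \<le> N"
  proof (rule ccontr)
    assume "\<not> \<beta> + n \<le> N"
    then have "N - \<beta> < n" using \<beta>(2) by arith
    moreover have "nat ((int t1 - int (N - \<beta>)) mod int N) = j" using cyclic_sub_complement[OF \<beta>(2)] \<beta> by simp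
    ultimately show False using j_bdry unfolding cyc_boundary_def by blast
  qed
  moreover have "gap + n \<le> \<beta>"
  proof (rule ccontr)
    assume "\<not> gap + n \<le> \<beta>"
    then have "\<beta> - gap < n" using len_le len_gap by arith
    moreover have "(t2 + (\<beta> - gap)) mod N = j"
      using cyclic_offset_from_second[OF t1, of t2 \<beta>] len_le len_gap \<beta> unfolding gap_def by simp
    ultimately show False using j_bdry unfolding cyc_boundary_def by blast
  qed
  ultimately show ?thesis using cyc_dist_from_offsets[OF \<alpha>(1) \<beta>(1) \<alpha>(2)] \<alpha>(3) len_gap by simp
qed

lemma scalar_prod_mult_unit_vec:
  fixes S :: "real mat"
  assumes S: "S \<in> carrier_mat d d" and symS: "sym_mat S" and x: "x \<in> carrier_vec d" and z: "z < d"
  shows "x \<bullet> (S *\<^sub>v unit_vec d z) = (S *\<^sub>v x) $ z"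
  using sym_mat_scalar_prod_comm[OF S symS x unit_vec_carrier] S x z by (simp add: scalar_prod_left_unit)

lemma banded_inverse_imp_reciprocal:
  fixes S K :: "real mat"
  assumes n: "n \<ge> 1" and pd: "pos_def (m * N) S"
    and K: "K \<in> carrier_mat (m * N) (m * N)" and KS: "K * S = 1\<^sub>m (m * N)" and symK: "sym_mat K"
    and band: "banded m N n K"
  shows "reciprocal m N n S"
  unfolding reciprocal_def cond_orth_def
proof (intro allI impI ballI)
  fix t1 t2 u v p q
  let ?d = "m * N" and ?A = "cyc_open N t1 t2" and ?C = "cyc_boundary N n t1 t2"
  assume t: "t1 < N" "t2 < N"
    and u: "u \<in> span_times m N ?A" and v: "v \<in> span_times m N ({..<N} - ?A)"
    and p: "p \<in> span_times m N ?C" and q: "q \<in> span_times m N ?C"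
    and orth_x: "\<forall>w\<in>span_times m N ?C. cov_inner S (u - p) w = 0"
    and orth_y: "\<forall>w\<in>span_times m N ?C. cov_inner S (v - q) w = 0"
  have S: "S \<in> carrier_mat ?d ?d" and symS: "sym_mat S" using pd unfolding pos_def_def by auto
  have carr: "u \<in> carrier_vec ?d" "v \<in> carrier_vec ?d" "p \<in> carrier_vec ?d" "q \<in> carrier_vec ?d"
    using u v p q unfolding span_times_def by auto
  have S_residual: "(S *\<^sub>v w) $ z = 0"
    if "w \<in> carrier_vec ?d" "\<forall>e\<in>span_times m N ?C. cov_inner S w e = 0" "z < ?d" "z div m \<in> ?C" for w z
  proof -
    have "unit_vec ?d z \<in> span_times m N ?C" using that unfolding span_times_def by auto
    then show ?thesis
      using that scalar_prod_mult_unit_vec[OF S symS that(1,3)] unfolding cov_inner_def by simp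
  qed
  show "cov_inner S (u - p) (v - q) = 0"
    unfolding cov_inner_def
  proof (rule inverse_sparsity_orthogonal[OF S K KS symK,
        where P = "\<lambda>z. z div m \<in> ?A \<and> z div m \<notin> ?C" and R = "\<lambda>z. z div m \<in> ?C"])
    fix z w assume "z < ?d" "w < ?d" "z div m \<in> ?A \<and> z div m \<notin> ?C"
      "\<not> (w div m \<in> ?A \<and> w div m \<notin> ?C)" "w div m \<notin> ?C"
    then show "K $$ (z, w) = 0"
      using cyc_dist_open_outside_boundary[OF n t index_div_lt] band
      unfolding banded_def by blast
  qed (use carr u v p q orth_x orth_y S_residual in \<open>auto simp: span_times_def\<close>)
qed

theorem theorem7:
  fixes m n N :: nat and Sig :: "nat \<Rightarrow> real mat" and S :: "real mat"
  assumes "m \<ge> 1" and "n \<ge> 1" and "N > 2 * n"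
    and "\<forall>k \<le> n. Sig k \<in> carrier_mat m m"
    and "MEP_minimizer m N n Sig S"
  shows "(\<exists>Sinv. Sinv \<in> carrier_mat (m*N) (m*N) \<and> inverts_mat S Sinv \<and> inverts_mat Sinv S \<and>
            sym_mat Sinv \<and> block_circulant m N Sinv \<and> banded m N n Sinv)
         \<and> stationary_reciprocal_cov m N n S"
proof -
  note m = assms(1) and n = assms(2) and opt = assms(5)
  have N: "N \<ge> 1" using assms(3) by simp
  have pd: "pos_def (m * N) S" and circS: "block_circulant m N S"
    using opt unfolding MEP_minimizer_def MEP_feasible_def block_circulant_def by auto
  then have S: "S \<in> carrier_mat (m * N) (m * N)" unfolding pos_def_def by simp
  obtain K where K: "K \<in> carrier_mat (m * N) (m * N)" and SK: "S * K = 1\<^sub>m (m * N)"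
    and KS: "K * S = 1\<^sub>m (m * N)" and symK: "sym_mat K"
    using pos_def_inverse[OF pd] by blast
  have circK: "block_circulant m N K"
    using orthogonal_conj_inverse[OF U_mat_carrier[OF m N] S K U_mat_orthogonal[OF m N]] circS KS SK
    unfolding block_circulant_def by blast
  have band: "banded m N n K"
    using MEP_minimizer_inverse_banded[OF opt K SK symK circK] .
  have "reciprocal m N n S"
    using banded_inverse_imp_reciprocal[OF n pd K KS symK band] .
  then show ?thesis
    using K SK KS S symK circK band circS pos_def_imp_pos_semidef[OF pd]
    unfolding stationary_reciprocal_cov_def inverts_mat_def by auto
qed

end
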